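(* Let $m\in\mathbb N$. For all $\varepsilon_1,\dots,\varepsilon_m\in\{\pm1\}$ and $i_1,\dots,i_m\in\mathbb N$, $$\varepsilon_1\eta^{i_1}+\dots+\varepsilon_m\eta^{i_m}=0\quad\text{implies}\quad \varepsilon_1a_{i_1}+\dots+\varepsilon_ma_{i_m}=0.$$
   Context: Standing setting: $d\in\mathbb N$; $\lambda_1,\dots,\lambda_d\in\mathbb C$ are the roots of an irreducible polynomial of degree $d$ with integer coefficients; $c_1,\dots,c_d\in\mathbb C$; the dominant root condition holds: $\lambda_1$ is real, $\lambda_1>1$, $\lambda_1>\max\{|\lambda_2|,\dots,|\lambda_d|\}$, $c_1\ne0$; $a_n=c_1\lambda_1^n+\dots+c_d\lambda_d^n$ is a positive integer for every $n\in\mathbb N$; and $\eta:=\lambda_1$. *)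

theory Defs
  imports Complex_Main "HOL-Computational_Algebra.Computational_Algebra"
begin

definition lrs_seq :: "nat \<Rightarrow> (nat \<Rightarrow> complex) \<Rightarrow> (nat \<Rightarrow> complex) \<Rightarrow> nat \<Rightarrow> complex" where
  "lrs_seq d c lam n = (\<Sum>k=1..d. c k * lam k ^ n)"

end

theory Submission
  imports Defs
begin

text \<open>The signed sum \<open>\<Sum>\<^sub>j \<epsilon>\<^sub>j x\<^bsup>i\<^sub>j\<^esup>\<close> is an integer polynomial \<open>Q\<close> with
  \<open>Q(\<eta>) = 0\<close>. An irreducible integer polynomial divides every integer polynomial with which it
  shares a root: pseudo-division shows that a nonzero polynomial of minimal degree vanishing there
  does so up to a scalar, and primality shows that the irreducible one has minimal degree.
  Hence \<open>P\<close> divides \<open>Q\<close>, so \<open>Q\<close> vanishes at all conjugates \<open>\<lambda>\<^sub>k\<close>, and \<open>\<Sum>\<^sub>j \<epsilon>\<^sub>j a\<^bsub>i\<^sub>j\<^esub> = \<Sum>\<^sub>k c\<^sub>k Q(\<lambda>\<^sub>k) = 0\<close>.\<close>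

lemma map_poly_of_int_add:
  "map_poly (of_int :: int \<Rightarrow> 'a::comm_ring_1) (p + q) = map_poly of_int p + map_poly of_int q"
  by (rule poly_eqI) (simp add: coeff_map_poly)

lemma map_poly_of_int_diff:
  "map_poly (of_int :: int \<Rightarrow> 'a::comm_ring_1) (p - q) = map_poly of_int p - map_poly of_int q"
  by (rule poly_eqI) (simp add: coeff_map_poly)

lemma map_poly_of_int_smult:
  "map_poly (of_int :: int \<Rightarrow> 'a::comm_ring_1) (smult c p) = smult (of_int c) (map_poly of_int p)"
  by (rule poly_eqI) (simp add: coeff_map_poly)

lemma map_poly_of_int_mult:
  "map_poly (of_int :: int \<Rightarrow> 'a::comm_ring_1) (p * q) = map_poly of_int p * map_poly of_int q"
  by (induction p) (auto simp: map_poly_pCons map_poly_of_int_add map_poly_of_int_smult)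

lemma map_poly_of_int_sum:
  "map_poly (of_int :: int \<Rightarrow> 'a::comm_ring_1) (\<Sum>j\<in>A. f j) = (\<Sum>j\<in>A. map_poly of_int (f j))"
  by (induction A rule: infinite_finite_induct) (simp_all add: map_poly_of_int_add)

lemma poly_map_poly_of_int_sum_monom:
  "poly (map_poly (of_int :: int \<Rightarrow> 'a::comm_ring_1) (\<Sum>j\<in>A. monom (e j) (n j))) x
     = (\<Sum>j\<in>A. of_int (e j) * x ^ n j)"
  by (simp add: map_poly_of_int_sum map_poly_monom poly_sum poly_monom)

lemma min_degree_root_dvd_smult:
  fixes R S :: "int poly" and x :: "'a::comm_ring_1"
  assumes R: "R \<noteq> 0" "poly (map_poly of_int R) x = 0"
    and R_min: "\<And>T. T \<noteq> 0 \<Longrightarrow> poly (map_poly of_int T) x = 0 \<Longrightarrow> degree R \<le> degree T"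
    and S: "poly (map_poly of_int S) x = 0"
  obtains c D where "c \<noteq> 0" "smult c S = R * D"
proof -
  obtain D T where div: "pseudo_divmod S R = (D, T)" by (metis surj_pair)
  define c where "c = lead_coeff R ^ (Suc (degree S) - degree R)"
  have "c \<noteq> 0" using R by (simp add: c_def)
  have eq: "smult c S = R * D + T" and T_deg: "T = 0 \<or> degree T < degree R"
    using pseudo_divmod[OF R(1) div] by (simp_all add: c_def)
  have "poly (map_poly of_int T) x = poly (map_poly of_int (smult c S - R * D)) x"
    by (simp add: eq)
  also have "\<dots> = 0"
    using R S by (simp add: map_poly_of_int_diff map_poly_of_int_smult map_poly_of_int_mult)
  finally have "T = 0" using T_deg R_min by (meson leD)
  with eq \<open>c \<noteq> 0\<close> show thesis using that by simp
qed

lemma degree_ne_0_of_root: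
  fixes S :: "int poly" and x :: "'a::{comm_ring_1,ring_char_0}"
  assumes "S \<noteq> 0" "poly (map_poly of_int S) x = 0"
  shows "degree S \<noteq> 0"
proof
  assume "degree S = 0"
  then obtain s where "S = [:s:]" by (rule degree_eq_zeroE)
  with assms show False by (simp add: map_poly_pCons)
qed

lemma irreducible_root_min_degree:
  fixes P S :: "int poly" and x :: "'a::{comm_ring_1,ring_char_0}"
  assumes P_irr: "irreducible P" and P: "poly (map_poly of_int P) x = 0"
    and S: "S \<noteq> 0" "poly (map_poly of_int S) x = 0"
  shows "degree P \<le> degree S"
proof -
  have "P \<noteq> 0" using P_irr by auto
  then obtain R where R: "R \<noteq> 0" "poly (map_poly of_int R) x = 0"
    and R_min: "\<And>T. T \<noteq> 0 \<Longrightarrow> poly (map_poly of_int T) x = 0 \<Longrightarrow> degree R \<le> degree T"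
    using ex_has_least_nat[of "\<lambda>T. T \<noteq> 0 \<and> poly (map_poly of_int T) x = 0" P degree] P
    by blast
  obtain c D where "c \<noteq> 0" and PRD: "smult c P = R * D"
    using min_degree_root_dvd_smult[OF R R_min P] by blast
  have "P dvd R * D" by (metis PRD dvd_smult dvd_refl)
  then have "P dvd R \<or> P dvd D"
    using irreducible_imp_prime_poly[OF P_irr] by (simp add: prime_elem_dvd_multD)
  moreover have "\<not> P dvd D"
  proof
    assume "P dvd D"
    then obtain G where "D = P * G" by (elim dvdE)
    with PRD have "P * (R * G) = P * [:c:]" by (simp add: algebra_simps)
    with \<open>P \<noteq> 0\<close> have RG: "R * G = [:c:]" by (metis mult_left_cancel)
    with \<open>c \<noteq> 0\<close> have "G \<noteq> 0" by auto
    with RG \<open>R \<noteq> 0\<close> have "degree R + degree G = 0" by (metis degree_mult_eq degree_pCons_0)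
    with degree_ne_0_of_root[OF R] show False by simp
  qed
  ultimately have "degree P \<le> degree R" using R(1) by (simp add: dvd_imp_degree_le)
  also have "\<dots> \<le> degree S" using R_min[OF S] .
  finally show ?thesis .
qed

lemma irreducible_dvd_of_common_root:
  fixes P Q :: "int poly" and x :: "'a::{comm_ring_1,ring_char_0}"
  assumes P_irr: "irreducible P" and P: "poly (map_poly of_int P) x = 0"
    and Q: "poly (map_poly of_int Q) x = 0"
  shows "P dvd Q"
proof -
  have "P \<noteq> 0" using P_irr by auto
  obtain c D where "c \<noteq> 0" and "smult c Q = P * D"
    using min_degree_root_dvd_smult[OF \<open>P \<noteq> 0\<close> P irreducible_root_min_degree[OF P_irr P] Q] .
  then have "P dvd [:c:] * Q" by (simp add: dvdI)
  then have "P dvd [:c:] \<or> P dvd Q"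
    using irreducible_imp_prime_poly[OF P_irr] by (rule prime_elem_dvd_multD[rotated])
  moreover have "\<not> P dvd [:c:]"
    using degree_ne_0_of_root[OF \<open>P \<noteq> 0\<close> P] \<open>c \<noteq> 0\<close> by (auto dest: dvd_imp_degree_le)
  ultimately show ?thesis by blast
qed

lemma poly_smult_prod_linear_factors_root:
  fixes r :: "'b \<Rightarrow> 'a::comm_ring_1"
  assumes "finite K" "k \<in> K"
  shows "poly (smult a (\<Prod>l\<in>K. [:- r l, 1:])) (r k) = 0"
proof -
  have "(\<Prod>l\<in>K. poly [:- r l, 1:] (r k)) = 0"
    using assms by (intro prod_zero) auto
  then show ?thesis by (simp add: poly_prod)
qed

lemma sum_lrs_seq_eq_sum_poly:
  "(\<Sum>j\<in>A. of_int (e j) * lrs_seq d c lam (n j))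
     = (\<Sum>k=1..d. c k * poly (map_poly of_int (\<Sum>j\<in>A. monom (e j) (n j))) (lam k))"
proof -
  have "(\<Sum>j\<in>A. of_int (e j) * lrs_seq d c lam (n j))
      = (\<Sum>j\<in>A. \<Sum>k=1..d. c k * (of_int (e j) * lam k ^ n j))"
    unfolding lrs_seq_def by (simp add: sum_distrib_left mult_ac)
  also have "\<dots> = (\<Sum>k=1..d. c k * (\<Sum>j\<in>A. of_int (e j) * lam k ^ n j))"
    by (subst sum.swap) (simp add: sum_distrib_left)
  finally show ?thesis by (simp add: poly_map_poly_of_int_sum_monom)
qed

theorem lemma6p2:
  fixes d m :: nat and lam c :: "nat \<Rightarrow> complex" and P :: "int poly"
    and eps :: "nat \<Rightarrow> int" and i :: "nat \<Rightarrow> nat"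
  assumes d_pos: "d \<ge> 1"
    and P_irr: "irreducible P"
    and P_deg: "degree P = d"
    and P_roots: "map_poly of_int P = smult (of_int (lead_coeff P)) (\<Prod>k=1..d. [:- lam k, 1:])"
    and lam1_real: "lam 1 \<in> \<real>"
    and lam1_gt1: "Re (lam 1) > 1"
    and lam1_dom: "\<forall>k\<in>{2..d}. cmod (lam k) < Re (lam 1)"
    and c1_nz: "c 1 \<noteq> 0"
    and a_posint: "\<forall>n\<ge>1. \<exists>z::int. z > 0 \<and> lrs_seq d c lam n = of_int z"
    and eps_pm: "\<forall>j\<in>{1..m}. eps j = 1 \<or> eps j = -1"
  shows "(\<Sum>j=1..m. of_int (eps j) * Re (lam 1) ^ i j) = (0::real) \<longrightarrow>
         (\<Sum>j=1..m. of_int (eps j) * lrs_seq d c lam (i j)) = 0"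
proof
  assume eta_root: "(\<Sum>j=1..m. of_int (eps j) * Re (lam 1) ^ i j) = (0::real)"
  define Q :: "int poly" where "Q = (\<Sum>j=1..m. monom (eps j) (i j))"
  have P_root: "poly (map_poly of_int P) (lam k) = 0" if "k \<in> {1..d}" for k
    unfolding P_roots using that by (intro poly_smult_prod_linear_factors_root) auto
  have "lam 1 = of_real (Re (lam 1))"
    using lam1_real by (simp add: complex_is_Real_iff complex_eq_iff)
  then have "poly (map_poly of_int Q) (lam 1) = of_real (\<Sum>j=1..m. of_int (eps j) * Re (lam 1) ^ i j)"
    unfolding Q_def poly_map_poly_of_int_sum_monom by simp
  with eta_root have "poly (map_poly of_int Q) (lam 1) = 0" by simp
  then have "P dvd Q"
    using irreducible_dvd_of_common_root[OF P_irr P_root[of 1]] d_pos by simp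
  then have "poly (map_poly of_int Q) (lam k) = 0" if "k \<in> {1..d}" for k
    using P_root[OF that] by (auto simp: map_poly_of_int_mult elim!: dvdE)
  then show "(\<Sum>j=1..m. of_int (eps j) * lrs_seq d c lam (i j)) = 0"
    unfolding sum_lrs_seq_eq_sum_poly Q_def[symmetric] by simp
qed

end
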